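(* Let $L>0$, $\beta\in(0,1)$, and let $f:[0,L]\to\mathbb R$ be such that $f'\in AC[0,L]$ and $f''\in L^{\frac1{1-\beta}}(\kappa,L)$ for every $\kappa>0$. If $f$ attains a local maximum at $x_0\in(0,L)$ which is a global maximum of $f$ on $[0,x_0]$, then $\big(\frac{\partial}{\partial x}D^\alpha f\big)(x_0)\le0$ for every $\alpha\in(0,\beta)$.
   Context: For $\alpha\in(0,1)$, the Caputo derivative is $D^{\alpha}f(x)=\frac{1}{\Gamma(1-\alpha)}\frac{d}{dx}\int_0^x(x-p)^{-\alpha}[f(p)-f(0)]\,dp$, and $\frac{\partial}{\partial x}D^\alpha f$ is its derivative in $x$. *)

theory Defs
  imports "HOL-Analysis.Analysis"
begin

definition abs_cont_on :: "(real \<Rightarrow> real) \<Rightarrow> real \<Rightarrow> real \<Rightarrow> bool" where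
  "abs_cont_on g a b \<longleftrightarrow>
     (\<forall>\<epsilon>>0. \<exists>\<delta>>0. \<forall>(n::nat) (u::nat \<Rightarrow> real) (v::nat \<Rightarrow> real).
        (\<forall>k<n. a \<le> u k \<and> u k \<le> v k \<and> v k \<le> b) \<and>
        (\<forall>j<n. \<forall>k<n. j \<noteq> k \<longrightarrow> v j \<le> u k \<or> v k \<le> u j) \<and>
        (\<Sum>k<n. v k - u k) < \<delta>
        \<longrightarrow> (\<Sum>k<n. \<bar>g (v k) - g (u k)\<bar>) < \<epsilon>)"

definition in_Lp :: "real \<Rightarrow> (real \<Rightarrow> real) \<Rightarrow> real \<Rightarrow> real \<Rightarrow> bool" where
  "in_Lp q g a b \<longleftrightarrow>
     set_borel_measurable lborel {a..b} g \<and> set_integrable lborel {a..b} (\<lambda>x. \<bar>g x\<bar> powr q)"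

definition caputo :: "real \<Rightarrow> (real \<Rightarrow> real) \<Rightarrow> real \<Rightarrow> real" where
  "caputo \<alpha> f x =
     (1 / Gamma (1 - \<alpha>)) *
       deriv (\<lambda>y. integral {0..y} (\<lambda>p. (y - p) powr (-\<alpha>) * (f p - f 0))) x"

end

(*
  Extend f to the left of 0 by the constant f 0 and subtract f 0; call the result g. Substituting
  s = y - p, the Caputo integral becomes the integral of s^(-alpha) g(y - s) over the fixed interval
  [0, L], which may be differentiated under the integral sign because g is Lipschitz. Integrating
  by parts gives the Marchaud form
    Gamma(1 - alpha) D^alpha f(y) = L^(-alpha) g(y) + alpha * int_0^L (g(y) - g(y - s)) s^(-alpha-1) ds.
  Absolute continuity of f' together with f'' in L^(1/(1-beta)) makes f' beta-Hoelder away from 0,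
  so for alpha < beta the difference quotients of this integrand are dominated by C s^(beta-alpha-1)
  and the Marchaud form can again be differentiated at x0. As f'(x0) = 0, the derivative is
  alpha * int_0^L -f'(x0 - s) s^(-alpha-1) ds, and a second integration by parts rewrites it in
  terms of the increments f(x0 - s) - f(x0), which are non-positive because f(x0) is the maximum
  of f on [0, x0].
*)
theory Submission
  imports Defs
begin

definition ac_modulus :: "(real \<Rightarrow> real) \<Rightarrow> real \<Rightarrow> real \<Rightarrow> real \<Rightarrow> real \<Rightarrow> bool" where
  "ac_modulus g a b \<delta> \<epsilon> \<longleftrightarrow>
     (\<forall>(n::nat) (u::nat \<Rightarrow> real) (v::nat \<Rightarrow> real).
        (\<forall>k<n. a \<le> u k \<and> u k \<le> v k \<and> v k \<le> b) \<and>
        (\<forall>j<n. \<forall>k<n. j \<noteq> k \<longrightarrow> v j \<le> u k \<or> v k \<le> u j) \<and>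
        (\<Sum>k<n. v k - u k) < \<delta>
        \<longrightarrow> (\<Sum>k<n. \<bar>g (v k) - g (u k)\<bar>) < \<epsilon>)"

lemma abs_cont_on_iff_ac_modulus: "abs_cont_on g a b \<longleftrightarrow> (\<forall>\<epsilon>>0. \<exists>\<delta>>0. ac_modulus g a b \<delta> \<epsilon>)"
  unfolding abs_cont_on_def ac_modulus_def ..

lemma ac_modulus_subinterval:
  assumes "ac_modulus g a b \<delta> \<epsilon>" "a \<le> c" "d \<le> b"
  shows "ac_modulus g c d \<delta> \<epsilon>"
  unfolding ac_modulus_def
proof (intro allI impI)
  fix n :: nat and u v :: "nat \<Rightarrow> real"
  assume uv: "(\<forall>k<n. c \<le> u k \<and> u k \<le> v k \<and> v k \<le> d) \<and>
    (\<forall>j<n. \<forall>k<n. j \<noteq> k \<longrightarrow> v j \<le> u k \<or> v k \<le> u j) \<and> (\<Sum>k<n. v k - u k) < \<delta>"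
  moreover from uv have "\<forall>k<n. a \<le> u k \<and> u k \<le> v k \<and> v k \<le> b"
    using assms(2,3) by force
  ultimately show "(\<Sum>k<n. \<bar>g (v k) - g (u k)\<bar>) < \<epsilon>"
    using assms(1) unfolding ac_modulus_def by blast
qed

lemma abs_cont_on_subinterval:
  assumes "abs_cont_on g a b" "a \<le> c" "d \<le> b"
  shows "abs_cont_on g c d"
  using assms ac_modulus_subinterval unfolding abs_cont_on_iff_ac_modulus by meson

lemma ac_modulus_finite_family:
  fixes u v :: "'i \<Rightarrow> real"
  assumes \<delta>: "ac_modulus g a b \<delta> \<epsilon>"
    and "finite I" and bounds: "\<forall>i\<in>I. a \<le> u i \<and> u i \<le> v i \<and> v i \<le> b"
    and disjoint: "\<forall>i\<in>I. \<forall>j\<in>I. i \<noteq> j \<longrightarrow> v i \<le> u j \<or> v j \<le> u i"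
    and small: "(\<Sum>i\<in>I. v i - u i) < \<delta>"
  shows "(\<Sum>i\<in>I. \<bar>g (v i) - g (u i)\<bar>) < \<epsilon>"
proof -
  obtain e where e: "bij_betw e {..<card I} I"
    using ex_bij_betw_nat_finite[OF \<open>finite I\<close>] by (auto simp: lessThan_atLeast0)
  have e_in: "e k \<in> I" if "k < card I" for k
    using e that by (auto dest: bij_betwE)
  have e_inj: "e j \<noteq> e k" if "j < card I" "k < card I" "j \<noteq> k" for j k
    using e that by (auto simp: bij_betw_def inj_on_eq_iff)
  have "(\<Sum>k<card I. \<bar>g ((v \<circ> e) k) - g ((u \<circ> e) k)\<bar>) < \<epsilon>"
  proof (rule \<delta>[unfolded ac_modulus_def, rule_format], intro conjI)
    show "(\<Sum>k<card I. (v \<circ> e) k - (u \<circ> e) k) < \<delta>"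
      using small sum.reindex_bij_betw[OF e, of "\<lambda>i. v i - u i"] by simp
  qed (use bounds disjoint e_in e_inj in auto)
  then show ?thesis
    using sum.reindex_bij_betw[OF e, of "\<lambda>i. \<bar>g (v i) - g (u i)\<bar>"] by simp
qed

lemma abs_cont_on_imp_continuous_on:
  assumes "abs_cont_on g a b"
  shows "continuous_on {a..b} g"
  unfolding continuous_on_iff
proof (intro ballI allI impI)
  fix x \<epsilon> :: real assume x: "x \<in> {a..b}" and "\<epsilon> > 0"
  with assms obtain \<delta> where "\<delta> > 0" and \<delta>: "ac_modulus g a b \<delta> \<epsilon>"
    unfolding abs_cont_on_iff_ac_modulus by blast
  have "dist (g y) (g x) < \<epsilon>" if "y \<in> {a..b}" "dist y x < \<delta>" for y
  proof -
    have "\<bar>g (max x y) - g (min x y)\<bar> < \<epsilon>"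
      using \<delta>[unfolded ac_modulus_def, rule_format, of 1 "\<lambda>_. min x y" "\<lambda>_. max x y"] x that
      by (cases "x \<le> y") (auto simp: dist_real_def max_def min_def)
    then show ?thesis
      by (cases "x \<le> y") (simp_all add: dist_real_def max_def min_def abs_minus_commute)
  qed
  with \<open>\<delta> > 0\<close> show "\<exists>\<delta>>0. \<forall>y\<in>{a..b}. dist y x < \<delta> \<longrightarrow> dist (g y) (g x) < \<epsilon>" by blast
qed

lemma greaterThanLessThan_disjoint_imp_le:
  fixes u v u' v' :: real
  assumes "{u<..<v} \<inter> {u'<..<v'} = {}" "u < v" "u' < v'"
  shows "v \<le> u' \<or> v' \<le> u"
proof (rule ccontr)
  assume "\<not> (v \<le> u' \<or> v' \<le> u)"
  with assms(2,3) have "max u u' < min v v'" by simp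
  then obtain m where "max u u' < m" "m < min v v'" using dense by blast
  with assms(1) show False by auto
qed

lemma tagged_division_sum_content_le_measure:
  assumes tag: "\<D> tagged_division_of {a..b}" and sub: "\<D>' \<subseteq> \<D>"
    and U: "\<Union>(snd ` \<D>') \<subseteq> U" "U \<in> lmeasurable"
  shows "(\<Sum>p\<in>\<D>'. Henstock_Kurzweil_Integration.content (snd p)) \<le> measure lebesgue U"
proof -
  have fin: "finite \<D>'" using tag sub finite_subset by blast
  have box: "\<exists>c d. snd p = cbox c d" if "p \<in> \<D>'" for p
    using that sub tagged_division_ofD(4)[OF tag, of "fst p" "snd p"] by auto
  have meas: "snd p \<in> lmeasurable" if "p \<in> \<D>'" for p
    using box[OF that] by auto
  have "(\<Sum>p\<in>\<D>'. Henstock_Kurzweil_Integration.content (snd p)) = (\<Sum>p\<in>\<D>'. measure lebesgue (snd p))"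
  proof (intro sum.cong refl)
    fix p assume "p \<in> \<D>'"
    then obtain c d where "snd p = cbox c d" using box by blast
    then show "Henstock_Kurzweil_Integration.content (snd p) = measure lebesgue (snd p)" by simp
  qed
  also have "\<dots> = measure lebesgue (\<Union>(snd ` \<D>'))"
  proof (rule measure_negligible_finite_Union_image[symmetric, OF fin meas])
    show "pairwise (\<lambda>p q. negligible (snd p \<inter> snd q)) \<D>'"
      unfolding pairwise_def
    proof (intro ballI impI)
      fix p q assume pq: "p \<in> \<D>'" "q \<in> \<D>'" "p \<noteq> q"
      obtain c d c' d' where cd: "snd p = cbox c d" "snd q = cbox c' d'"
        using box[OF pq(1)] box[OF pq(2)] by blast
      have "interior (snd p) \<inter> interior (snd q) = {}"
        using tagged_division_ofD(5)[OF tag, of "fst p" "snd p" "fst q" "snd q"] pq sub by auto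
      then have "snd p \<inter> snd q \<subseteq> (cbox c d - box c d) \<union> (cbox c' d' - box c' d')"
        using cd by (auto simp: interior_cbox)
      moreover have "negligible ((cbox c d - box c d) \<union> (cbox c' d' - box c' d'))"
        by (simp add: negligible_frontier_interval)
      ultimately show "negligible (snd p \<inter> snd q)" using negligible_subset by blast
    qed
  qed
  also have "\<dots> \<le> measure lebesgue U"
  proof (rule measure_mono_fmeasurable[OF U(1) _ U(2)])
    show "\<Union>(snd ` \<D>') \<in> sets lebesgue"
      using meas fin by (intro sets.finite_UN) auto
  qed
  finally show ?thesis .
qed

lemma tagged_division_of_Icc_member:
  fixes a b :: real
  assumes "\<D> tagged_division_of {a..b}" "(x, K) \<in> \<D>"
  shows "a \<le> Inf K" "Inf K \<le> Sup K" "Sup K \<le> b"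
    "Henstock_Kurzweil_Integration.content K = Sup K - Inf K" "interior K = {Inf K<..<Sup K}"
proof -
  obtain u v where "K = {u..v}" using tagged_division_ofD(4)[OF assms] by auto
  moreover have "x \<in> K" "K \<subseteq> {a..b}" using tagged_division_ofD(2,3)[OF assms] by auto
  ultimately show "a \<le> Inf K" "Inf K \<le> Sup K" "Sup K \<le> b"
    "Henstock_Kurzweil_Integration.content K = Sup K - Inf K" "interior K = {Inf K<..<Sup K}"
    by auto
qed

lemma abs_cont_on_tagged_division_sum:
  assumes "abs_cont_on g a b" "\<epsilon> > 0"
  obtains \<delta> where "\<delta> > 0"
    "\<And>\<D> \<D>'. \<D> tagged_division_of {a..b} \<Longrightarrow> \<D>' \<subseteq> \<D> \<Longrightarrow>
       (\<Sum>p\<in>\<D>'. Henstock_Kurzweil_Integration.content (snd p)) < \<delta> \<Longrightarrow>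
       (\<Sum>p\<in>\<D>'. \<bar>g (Sup (snd p)) - g (Inf (snd p))\<bar>) < \<epsilon>"
proof -
  obtain \<delta> where "\<delta> > 0" and \<delta>: "ac_modulus g a b \<delta> \<epsilon>"
    using assms unfolding abs_cont_on_iff_ac_modulus by blast
  have "(\<Sum>p\<in>\<D>'. \<bar>g (Sup (snd p)) - g (Inf (snd p))\<bar>) < \<epsilon>"
    if tag: "\<D> tagged_division_of {a..b}" and sub: "\<D>' \<subseteq> \<D>"
      and small: "(\<Sum>p\<in>\<D>'. Henstock_Kurzweil_Integration.content (snd p)) < \<delta>" for \<D> \<D>'
  proof -
    define I where "I = {p \<in> \<D>'. Inf (snd p) < Sup (snd p)}"
    have fin: "finite \<D>'" using tag sub finite_subset by blast
    have interval: "a \<le> Inf (snd p)" "Inf (snd p) \<le> Sup (snd p)" "Sup (snd p) \<le> b"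
      "Henstock_Kurzweil_Integration.content (snd p) = Sup (snd p) - Inf (snd p)"
      "interior (snd p) = {Inf (snd p)<..<Sup (snd p)}" if "p \<in> \<D>'" for p
      using tagged_division_of_Icc_member[OF tag, of "fst p" "snd p"] that sub by auto
    have "(\<Sum>p\<in>\<D>'. \<bar>g (Sup (snd p)) - g (Inf (snd p))\<bar>) = (\<Sum>p\<in>I. \<bar>g (Sup (snd p)) - g (Inf (snd p))\<bar>)"
    proof (rule sum.mono_neutral_right[OF fin])
      show "\<forall>p\<in>\<D>' - I. \<bar>g (Sup (snd p)) - g (Inf (snd p))\<bar> = 0"
        using interval(2) by (force simp: I_def)
    qed (auto simp: I_def)
    also have "\<dots> < \<epsilon>"
    proof (rule ac_modulus_finite_family[OF \<delta>])
      show "finite I" using fin by (simp add: I_def)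
      show "\<forall>p\<in>I. a \<le> Inf (snd p) \<and> Inf (snd p) \<le> Sup (snd p) \<and> Sup (snd p) \<le> b"
        using interval(1-3) by (simp add: I_def)
      show "\<forall>p\<in>I. \<forall>q\<in>I. p \<noteq> q \<longrightarrow> Sup (snd p) \<le> Inf (snd q) \<or> Sup (snd q) \<le> Inf (snd p)"
      proof (intro ballI impI)
        fix p q assume "p \<in> I" "q \<in> I" "p \<noteq> q"
        then have p: "p \<in> \<D>'" "Inf (snd p) < Sup (snd p)" and q: "q \<in> \<D>'" "Inf (snd q) < Sup (snd q)"
          by (auto simp: I_def)
        have "interior (snd p) \<inter> interior (snd q) = {}"
          using tagged_division_ofD(5)[OF tag, of "fst p" "snd p" "fst q" "snd q"] sub p q \<open>p \<noteq> q\<close>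
          by (auto simp: prod_eq_iff)
        then have "{Inf (snd p)<..<Sup (snd p)} \<inter> {Inf (snd q)<..<Sup (snd q)} = {}"
          by (simp add: interval(5)[OF p(1)] interval(5)[OF q(1)])
        then show "Sup (snd p) \<le> Inf (snd q) \<or> Sup (snd q) \<le> Inf (snd p)"
          using p(2) q(2) by (rule greaterThanLessThan_disjoint_imp_le)
      qed
      have "(\<Sum>p\<in>I. Sup (snd p) - Inf (snd p)) = (\<Sum>p\<in>I. Henstock_Kurzweil_Integration.content (snd p))"
        using interval(4) by (simp add: I_def)
      also have "\<dots> \<le> (\<Sum>p\<in>\<D>'. Henstock_Kurzweil_Integration.content (snd p))"
        using fin by (intro sum_mono2) (auto simp: I_def)
      finally show "(\<Sum>p\<in>I. Sup (snd p) - Inf (snd p)) < \<delta>" using small by linarith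
    qed
    finally show ?thesis .
  qed
  with \<open>\<delta> > 0\<close> show thesis by (rule that)
qed

lemma tagged_division_sum_linear_approx:
  fixes g h :: "real \<Rightarrow> real"
  assumes tag: "\<D> tagged_division_of {a..b}" and "a \<le> b" and sub: "\<D>' \<subseteq> \<D>" and "0 \<le> e"
    and approx: "\<And>x K y. (x, K) \<in> \<D>' \<Longrightarrow> y \<in> K \<Longrightarrow> \<bar>g y - g x - h x * (y - x)\<bar> \<le> e * \<bar>y - x\<bar>"
  shows "\<bar>\<Sum>(x, K)\<in>\<D>'. Henstock_Kurzweil_Integration.content K * h x - (g (Sup K) - g (Inf K))\<bar> \<le> e * (b - a)"
proof -
  have fin: "finite \<D>" using tag by blast
  have each: "\<bar>Henstock_Kurzweil_Integration.content K * h x - (g (Sup K) - g (Inf K))\<bar>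
      \<le> e * Henstock_Kurzweil_Integration.content K" if xK: "(x, K) \<in> \<D>'" for x K
  proof -
    have "(x, K) \<in> \<D>" using xK sub by auto
    then obtain u v where "K = cbox u v" "x \<in> K"
      using tagged_division_ofD(2,4)[OF tag] by blast
    then have K: "K = {u..v}" "u \<le> x" "x \<le> v" by auto
    have "Henstock_Kurzweil_Integration.content K * h x - (g (Sup K) - g (Inf K)) =
        (g u - g x - h x * (u - x)) - (g v - g x - h x * (v - x))"
      using K by (simp add: algebra_simps)
    also have "\<bar>\<dots>\<bar> \<le> \<bar>g u - g x - h x * (u - x)\<bar> + \<bar>g v - g x - h x * (v - x)\<bar>"
      by (rule abs_triangle_ineq4)
    also have "\<dots> \<le> e * \<bar>u - x\<bar> + e * \<bar>v - x\<bar>"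
      using approx[OF xK, of u] approx[OF xK, of v] K by (intro add_mono) auto
    also have "\<dots> = e * Henstock_Kurzweil_Integration.content K"
      using K by (simp add: algebra_simps)
    finally show ?thesis .
  qed
  have "\<bar>\<Sum>(x, K)\<in>\<D>'. Henstock_Kurzweil_Integration.content K * h x - (g (Sup K) - g (Inf K))\<bar>
      \<le> (\<Sum>(x, K)\<in>\<D>'. \<bar>Henstock_Kurzweil_Integration.content K * h x - (g (Sup K) - g (Inf K))\<bar>)"
    by (rule sum_abs[THEN order_trans]) (simp add: case_prod_unfold)
  also have "\<dots> \<le> (\<Sum>(x, K)\<in>\<D>'. e * Henstock_Kurzweil_Integration.content K)"
    using each by (intro sum_mono) auto
  also have "\<dots> \<le> (\<Sum>(x, K)\<in>\<D>. e * Henstock_Kurzweil_Integration.content K)"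
    using fin sub \<open>0 \<le> e\<close> by (intro sum_mono2) auto
  also have "\<dots> = e * (b - a)"
    using additive_content_tagged_division[of \<D> a b] tag \<open>a \<le> b\<close>
    by (simp add: sum_distrib_left[symmetric] case_prod_unfold)
  finally show ?thesis .
qed

lemma negligible_outer_open:
  assumes "negligible N" "\<delta> > 0"
  obtains U where "open U" "N \<subseteq> U" "U \<in> lmeasurable" "measure lebesgue U < \<delta>"
proof -
  have N: "N \<in> null_sets lebesgue" using assms(1) negligible_iff_null_sets by blast
  then obtain U where U: "open U" "N \<subseteq> U" "U - N \<in> lmeasurable" "emeasure lebesgue (U - N) < ennreal \<delta>"
    using sets_lebesgue_outer_open[OF _ assms(2)] by blast
  have U_split: "U = (U - N) \<union> N" using U(2) by blast
  have "U \<in> lmeasurable"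
    by (metis U_split U(3) N fmeasurableI_null_sets fmeasurable.Un)
  moreover have "measure lebesgue U = measure lebesgue (U - N)"
    by (metis U_split U(3) N fmeasurableD measure_Un_null_set)
  moreover have "measure lebesgue (U - N) < \<delta>"
    using U(4) emeasure_eq_measure2[OF U(3)] assms(2) by (simp add: ennreal_less_iff)
  ultimately show thesis using U(1,2) that by simp
qed

lemma derivative_gauge:
  fixes g h :: "real \<Rightarrow> real"
  assumes "open U" "N \<subseteq> U" "0 < e"
    and deriv: "\<And>x. x \<in> {a..b} - N \<Longrightarrow> (g has_real_derivative h x) (at x)"
  obtains r where "\<And>x. r x > 0" "\<And>x. x \<in> N \<Longrightarrow> ball x (r x) \<subseteq> U"
    "\<And>x y. x \<in> {a..b} - N \<Longrightarrow> \<bar>y - x\<bar> < r x \<Longrightarrow> \<bar>g y - g x - h x * (y - x)\<bar> \<le> e * \<bar>y - x\<bar>"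
proof -
  have "\<exists>r>0. (x \<in> N \<longrightarrow> ball x r \<subseteq> U) \<and> (x \<in> {a..b} - N \<longrightarrow>
      (\<forall>y. \<bar>y - x\<bar> < r \<longrightarrow> \<bar>g y - g x - h x * (y - x)\<bar> \<le> e * \<bar>y - x\<bar>))" for x
  proof (cases "x \<in> {a..b} - N")
    case True
    then have "(g has_derivative (\<lambda>y. h x * y)) (at x)"
      using deriv by (simp add: has_field_derivative_def)
    then show ?thesis
      using True \<open>0 < e\<close> unfolding has_derivative_at_alt by (simp add: dist_real_def)
  next
    case False
    show ?thesis
    proof (cases "x \<in> N")
      case True
      then show ?thesis using assms(1,2) False open_contains_ball by blast
    qed (use False in \<open>intro exI[of _ 1], auto\<close>)
  qed
  then show thesis using that by metis
qed

lemma has_integral_abs_cont_on: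
  fixes g h :: "real \<Rightarrow> real"
  assumes "a \<le> b" and ac: "abs_cont_on g a b" and N: "negligible N"
    and deriv: "\<And>x. x \<in> {a..b} - N \<Longrightarrow> (g has_real_derivative h x) (at x)"
  shows "(h has_integral (g b - g a)) {a..b}"
proof -
  \<comment> \<open>With \<open>h0\<close> vanishing on \<open>N\<close>, tags in \<open>N\<close> contribute only increments of \<open>g\<close> over
    intervals inside an open set of small measure, which absolute continuity controls.\<close>
  define h0 where "h0 x = (if x \<in> N then 0 else h x)" for x
  have "(h0 has_integral (g b - g a)) {a..b}"
    unfolding has_integral_real
  proof (intro allI impI)
    fix \<epsilon> :: real assume "\<epsilon> > 0"
    then obtain \<delta> where "\<delta> > 0" and \<delta>: "\<And>\<D> \<D>'. \<D> tagged_division_of {a..b} \<Longrightarrow> \<D>' \<subseteq> \<D> \<Longrightarrow>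
       (\<Sum>p\<in>\<D>'. Henstock_Kurzweil_Integration.content (snd p)) < \<delta> \<Longrightarrow>
       (\<Sum>p\<in>\<D>'. \<bar>g (Sup (snd p)) - g (Inf (snd p))\<bar>) < \<epsilon> / 2"
      using abs_cont_on_tagged_division_sum[OF ac, of "\<epsilon> / 2"] by auto
    obtain U where U: "open U" "N \<subseteq> U" "U \<in> lmeasurable" "measure lebesgue U < \<delta>"
      using negligible_outer_open[OF N \<open>\<delta> > 0\<close>] by blast
    define e where "e = \<epsilon> / (2 * (b - a + 1))"
    have "e > 0" "e * (b - a) < \<epsilon> / 2"
      using \<open>\<epsilon> > 0\<close> \<open>a \<le> b\<close> by (auto simp: e_def field_simps)
    obtain r where r_pos: "\<And>x. r x > 0" and r_N: "\<And>x. x \<in> N \<Longrightarrow> ball x (r x) \<subseteq> U"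
      and r_approx: "\<And>x y. x \<in> {a..b} - N \<Longrightarrow> \<bar>y - x\<bar> < r x \<Longrightarrow>
        \<bar>g y - g x - h x * (y - x)\<bar> \<le> e * \<bar>y - x\<bar>"
      using derivative_gauge[OF U(1,2) \<open>e > 0\<close> deriv] by metis
    show "\<exists>\<gamma>. gauge \<gamma> \<and> (\<forall>\<D>. \<D> tagged_division_of {a..b} \<and> \<gamma> fine \<D> \<longrightarrow>
        norm ((\<Sum>(x, K)\<in>\<D>. Henstock_Kurzweil_Integration.content K *\<^sub>R h0 x) - (g b - g a)) < \<epsilon>)"
    proof (intro exI conjI allI impI)
      show "gauge (\<lambda>x. ball x (r x))" using r_pos by (simp add: gauge_ball_dependent)
      fix \<D> assume "\<D> tagged_division_of {a..b} \<and> (\<lambda>x. ball x (r x)) fine \<D>"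
      then have tag: "\<D> tagged_division_of {a..b}" and fine: "\<And>x K. (x, K) \<in> \<D> \<Longrightarrow> K \<subseteq> ball x (r x)"
        by (auto simp: fine_def)
      define \<D>N where "\<D>N = {p \<in> \<D>. fst p \<in> N}"
      define T where "T = (\<lambda>(x, K). Henstock_Kurzweil_Integration.content K * h0 x - (g (Sup K) - g (Inf K)))"
      have "(\<Sum>(x, K)\<in>\<D>. Henstock_Kurzweil_Integration.content K *\<^sub>R h0 x) - (g b - g a) = sum T \<D>"
        using additive_tagged_division_1[OF \<open>a \<le> b\<close> tag, of g]
        by (simp add: T_def sum_subtractf case_prod_unfold)
      also have "\<dots> = sum T \<D>N + sum T (\<D> - \<D>N)"
        using sum.subset_diff[of \<D>N \<D> T] tagged_division_of_finite[OF tag] by (auto simp: \<D>N_def)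
      finally have split: "(\<Sum>(x, K)\<in>\<D>. Henstock_Kurzweil_Integration.content K *\<^sub>R h0 x) - (g b - g a)
          = sum T \<D>N + sum T (\<D> - \<D>N)" .
      have "\<bar>sum T \<D>N\<bar> \<le> (\<Sum>p\<in>\<D>N. \<bar>g (Sup (snd p)) - g (Inf (snd p))\<bar>)"
        by (rule sum_abs[THEN order_trans]) (simp add: T_def \<D>N_def h0_def case_prod_unfold abs_minus_commute)
      also have "\<dots> < \<epsilon> / 2"
      proof (rule \<delta>[OF tag])
        have "\<D>N \<subseteq> \<D>" "\<Union>(snd ` \<D>N) \<subseteq> U" using fine r_N by (force simp: \<D>N_def)+
        then have "(\<Sum>p\<in>\<D>N. Henstock_Kurzweil_Integration.content (snd p)) \<le> measure lebesgue U"
          using tagged_division_sum_content_le_measure[OF tag _ _ U(3)] by blast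
        then show "(\<Sum>p\<in>\<D>N. Henstock_Kurzweil_Integration.content (snd p)) < \<delta>" using U(4) by linarith
      qed (auto simp: \<D>N_def)
      finally have bad: "\<bar>sum T \<D>N\<bar> < \<epsilon> / 2" .
      have "\<bar>sum T (\<D> - \<D>N)\<bar> \<le> e * (b - a)"
        unfolding T_def
      proof (rule tagged_division_sum_linear_approx[OF tag \<open>a \<le> b\<close> _ less_imp_le[OF \<open>e > 0\<close>]])
        fix x K y assume xK: "(x, K) \<in> \<D> - \<D>N" and "y \<in> K"
        then have "x \<in> {a..b} - N"
          using tagged_division_ofD(2,3)[OF tag, of x K] by (auto simp: \<D>N_def)
        moreover have "\<bar>y - x\<bar> < r x" using fine xK \<open>y \<in> K\<close> by (force simp: dist_real_def)
        ultimately show "\<bar>g y - g x - h0 x * (y - x)\<bar> \<le> e * \<bar>y - x\<bar>" by (simp add: h0_def r_approx)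
      qed auto
      with bad split \<open>e * (b - a) < \<epsilon> / 2\<close>
      show "norm ((\<Sum>(x, K)\<in>\<D>. Henstock_Kurzweil_Integration.content K *\<^sub>R h0 x) - (g b - g a)) < \<epsilon>"
        by simp
    qed
  qed
  then show ?thesis
    by (rule has_integral_spike[OF N, rotated]) (simp add: h0_def)
qed

lemma le_add_powr_Young:
  fixes t c q :: real
  assumes "0 \<le> t" "0 < c" "1 \<le> q"
  shows "t \<le> c + c powr (1 - q) * t powr q"
proof (cases "t \<le> c")
  case True
  then show ?thesis using assms by (simp add: add_increasing2)
next
  case False
  then have "t > 0" and "t / c \<ge> 1" using assms by auto
  have "c powr (1 - q) * t powr q = t * (t powr (q - 1) / c powr (q - 1))"
    using \<open>t > 0\<close> assms(2) by (simp add: powr_diff powr_add[symmetric] field_simps)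
  also have "\<dots> = t * (t / c) powr (q - 1)"
    using \<open>t > 0\<close> assms(2) by (simp add: powr_divide)
  also have "\<dots> \<ge> t * 1"
    using \<open>t > 0\<close> \<open>t / c \<ge> 1\<close> assms(3) by (intro mult_left_mono ge_one_powr_ge_zero) auto
  finally show ?thesis using assms by simp
qed

text \<open>Instead of Hoelder's inequality, integrate over \<open>[u, v]\<close>, \<open>l = v - u\<close>, the pointwise bound
  \<open>|w| \<le> l powr (\<beta> - 1) + l powr \<beta> * |w| powr q\<close> with \<open>q = 1 / (1 - \<beta>)\<close>.\<close>
lemma holder_of_deriv_Lp:
  fixes \<phi> w :: "real \<Rightarrow> real"
  assumes \<beta>: "0 < \<beta>" "\<beta> < 1"
    and ac: "abs_cont_on \<phi> \<kappa> L" and N: "negligible N"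
    and deriv: "\<And>x. x \<in> {\<kappa>..L} - N \<Longrightarrow> (\<phi> has_real_derivative w x) (at x)"
    and Lq: "(\<lambda>x. \<bar>w x\<bar> powr (1 / (1 - \<beta>))) integrable_on {\<kappa>..L}"
    and ab: "a \<in> {\<kappa>..L}" "b \<in> {\<kappa>..L}"
  shows "\<bar>\<phi> b - \<phi> a\<bar> \<le> (1 + integral {\<kappa>..L} (\<lambda>x. \<bar>w x\<bar> powr (1 / (1 - \<beta>)))) * \<bar>b - a\<bar> powr \<beta>"
proof -
  define q where "q = 1 / (1 - \<beta>)"
  define M where "M = integral {\<kappa>..L} (\<lambda>x. \<bar>w x\<bar> powr q)"
  have "1 \<le> q" using \<beta> by (simp add: q_def)
  have increment: "\<bar>\<phi> v - \<phi> u\<bar> \<le> (1 + M) * (v - u) powr \<beta>" if uv: "\<kappa> \<le> u" "u < v" "v \<le> L" for u v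
  proof -
    define l where "l = v - u"
    have "l > 0" using uv by (simp add: l_def)
    have F: "(w has_integral (\<phi> v - \<phi> u)) {u..v}"
    proof (rule has_integral_abs_cont_on[OF _ abs_cont_on_subinterval[OF ac] N])
      show "\<kappa> \<le> u" "v \<le> L" "u \<le> v" using uv by auto
      show "(\<phi> has_real_derivative w x) (at x)" if "x \<in> {u..v} - N" for x
        using that uv by (intro deriv) auto
    qed
    have Lq_uv: "(\<lambda>x. \<bar>w x\<bar> powr q) integrable_on {u..v}"
      using integrable_on_subinterval[OF Lq] uv by (auto simp: q_def)
    have pointwise: "\<bar>w x\<bar> \<le> l powr (\<beta> - 1) + l powr \<beta> * \<bar>w x\<bar> powr q" for x
    proof -
      have "(\<beta> - 1) * (1 - q) = \<beta>" using \<beta> by (simp add: q_def field_simps)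
      then have "(l powr (\<beta> - 1)) powr (1 - q) = l powr \<beta>" by (simp add: powr_powr)
      with le_add_powr_Young[of "\<bar>w x\<bar>" "l powr (\<beta> - 1)" q] \<open>l > 0\<close> \<open>1 \<le> q\<close> show ?thesis by simp
    qed
    have l_powr: "l powr (\<beta> - 1) * l = l powr \<beta>"
      using powr_mult_base[of l "\<beta> - 1"] \<open>l > 0\<close> by (simp add: mult.commute)
    have int_le: "integral {u..v} (\<lambda>x. \<bar>w x\<bar> powr q) \<le> M"
      unfolding M_def using Lq Lq_uv uv by (intro integral_subset_le) (auto simp: q_def)
    have "\<bar>\<phi> v - \<phi> u\<bar> = norm (integral {u..v} w)" using F by (simp add: integral_unique)
    also have "\<dots> \<le> integral {u..v} (\<lambda>x. l powr (\<beta> - 1) + l powr \<beta> * \<bar>w x\<bar> powr q)"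
      using F pointwise integrable_add[OF integrable_const_ivl integrable_on_cmult_left[OF Lq_uv]]
      by (intro integral_norm_bound_integral) auto
    also have "\<dots> = l powr (\<beta> - 1) * l + l powr \<beta> * integral {u..v} (\<lambda>x. \<bar>w x\<bar> powr q)"
      using integral_add[OF integrable_const_ivl integrable_on_cmult_left[OF Lq_uv]] uv
      by (simp add: l_def)
    also have "\<dots> \<le> l powr \<beta> + l powr \<beta> * M"
      using int_le by (simp add: l_powr mult_left_mono)
    also have "\<dots> = (1 + M) * (v - u) powr \<beta>"
      by (simp add: l_def algebra_simps)
    finally show ?thesis .
  qed
  have "M \<ge> 0" using Lq by (simp add: M_def q_def integral_nonneg)
  with ab increment[of a b] increment[of b a] show ?thesis
    by (cases a b rule: linorder_cases) (auto simp: M_def q_def abs_minus_commute)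
qed

lemma integral_diff_negligible:
  fixes f :: "'n::euclidean_space \<Rightarrow> 'a::banach"
  assumes "negligible E"
  shows "integral (S - E) f = integral S f"
  by (rule integral_spike_set) (auto intro: negligible_subset[OF assms])

lemma integrable_on_diff_negligible_iff:
  fixes f :: "'n::euclidean_space \<Rightarrow> 'a::banach"
  assumes "negligible E"
  shows "f integrable_on (S - E) \<longleftrightarrow> f integrable_on S"
  by (rule integrable_spike_set_eq, rule negligible_subset[OF assms]) auto

lemma integral_difference_quotient_tendsto:
  fixes P :: "real \<Rightarrow> real \<Rightarrow> real" and Q H :: "real \<Rightarrow> real" and X :: "nat \<Rightarrow> real"
  assumes P_int: "\<And>y. \<bar>y - y0\<bar> < r \<Longrightarrow> P y integrable_on S"
    and H: "H integrable_on S"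
    and bound: "\<And>y s. 0 < \<bar>y - y0\<bar> \<Longrightarrow> \<bar>y - y0\<bar> < r \<Longrightarrow> s \<in> S \<Longrightarrow>
      \<bar>(P y s - P y0 s) / (y - y0)\<bar> \<le> H s"
    and E: "negligible E"
    and deriv: "\<And>s. s \<in> S - E \<Longrightarrow> ((\<lambda>y. P y s) has_real_derivative Q s) (at y0)"
    and X: "X \<longlonglongrightarrow> y0" "\<And>k. X k \<noteq> y0" "\<And>k. \<bar>X k - y0\<bar> < r"
  shows "Q integrable_on S"
    and "(\<lambda>k. (integral S (P (X k)) - integral S (P y0)) / (X k - y0)) \<longlonglongrightarrow> integral S Q"
proof -
  define F where "F k s = (P (X k) s - P y0 s) / (X k - y0)" for k s
  have "\<bar>y0 - y0\<bar> < r" using X(3)[of 0] by linarith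
  then have F_int: "F k integrable_on S" for k
    unfolding F_def using P_int[OF X(3)] P_int[OF \<open>\<bar>y0 - y0\<bar> < r\<close>]
    by (intro integrable_on_divide integrable_diff)
  have F_integral: "integral S (F k) = (integral S (P (X k)) - integral S (P y0)) / (X k - y0)" for k
    unfolding F_def using P_int[OF X(3)] P_int[OF \<open>\<bar>y0 - y0\<bar> < r\<close>]
    by (simp add: integral_diff integral_divide)
  have X_at: "filterlim X (at y0) sequentially"
    using X(1,2) by (intro filterlim_atI) auto
  have conv: "(\<lambda>k. F k s) \<longlonglongrightarrow> Q s" if "s \<in> S - E" for s
  proof -
    have "((\<lambda>y. (P y s - P y0 s) / (y - y0)) \<longlongrightarrow> Q s) (at y0)"
      using deriv[OF that] by (simp add: has_field_derivative_iff)
    from filterlim_compose[OF this X_at] show ?thesis by (simp add: F_def)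
  qed
  have F_int': "F k integrable_on (S - E)" for k
    using F_int by (simp add: integrable_on_diff_negligible_iff[OF E])
  have H': "H integrable_on (S - E)"
    using H by (simp add: integrable_on_diff_negligible_iff[OF E])
  have F_bound: "norm (F k s) \<le> H s" if "s \<in> S - E" for k s
    using bound[of "X k" s] X(2,3) that by (simp add: F_def)
  note dominated = dominated_convergence[of F "S - E" H Q, OF F_int' H' F_bound conv]
  from dominated show "Q integrable_on S"
    and "(\<lambda>k. (integral S (P (X k)) - integral S (P y0)) / (X k - y0)) \<longlonglongrightarrow> integral S Q"
    by (simp_all add: integrable_on_diff_negligible_iff[OF E] integral_diff_negligible[OF E] F_integral)
qed

lemma has_real_derivative_integral_dominated:
  fixes P :: "real \<Rightarrow> real \<Rightarrow> real" and Q H :: "real \<Rightarrow> real"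
  assumes "r > 0"
    and P_int: "\<And>y. \<bar>y - y0\<bar> < r \<Longrightarrow> P y integrable_on S"
    and H: "H integrable_on S"
    and bound: "\<And>y s. 0 < \<bar>y - y0\<bar> \<Longrightarrow> \<bar>y - y0\<bar> < r \<Longrightarrow> s \<in> S \<Longrightarrow>
      \<bar>(P y s - P y0 s) / (y - y0)\<bar> \<le> H s"
    and E: "negligible E"
    and deriv: "\<And>s. s \<in> S - E \<Longrightarrow> ((\<lambda>y. P y s) has_real_derivative Q s) (at y0)"
  shows "((\<lambda>y. integral S (P y)) has_real_derivative integral S Q) (at y0)"
    and "Q integrable_on S"
proof -
  note tendsto = integral_difference_quotient_tendsto[OF P_int H bound E deriv]
  show "Q integrable_on S"
  proof (rule tendsto(1)[where X = "\<lambda>k. y0 + r / 2 * inverse (real (Suc k))"])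
    have "(\<lambda>k. y0 + r / 2 * inverse (real (Suc k))) \<longlonglongrightarrow> y0 + r / 2 * 0"
      by (intro tendsto_intros LIMSEQ_inverse_real_of_nat)
    then show "(\<lambda>k. y0 + r / 2 * inverse (real (Suc k))) \<longlonglongrightarrow> y0" by simp
    show "y0 + r / 2 * inverse (real (Suc k)) \<noteq> y0" "\<bar>y0 + r / 2 * inverse (real (Suc k)) - y0\<bar> < r" for k
      using \<open>r > 0\<close> by (auto simp: field_simps intro!: add_pos_nonneg)
  qed
  show "((\<lambda>y. integral S (P y)) has_real_derivative integral S Q) (at y0)"
    unfolding has_field_derivative_iff tendsto_at_iff_sequentially
  proof (intro allI impI)
    fix X :: "nat \<Rightarrow> real" assume X: "\<forall>i. X i \<in> UNIV - {y0}" "X \<longlonglongrightarrow> y0"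
    have "\<forall>\<^sub>F i in sequentially. dist (X i) y0 < r" using X(2) \<open>r > 0\<close> by (rule tendstoD)
    then obtain N0 where N0: "\<And>i. i \<ge> N0 \<Longrightarrow> \<bar>X i - y0\<bar> < r"
      by (auto simp: eventually_sequentially dist_real_def)
    have "(\<lambda>k. (integral S (P (X (k + N0))) - integral S (P y0)) / (X (k + N0) - y0)) \<longlonglongrightarrow> integral S Q"
    proof (rule tendsto(2))
      show "(\<lambda>k. X (k + N0)) \<longlonglongrightarrow> y0" using X(2) by (rule LIMSEQ_ignore_initial_segment)
    qed (use X(1) N0 in auto)
    then show "((\<lambda>y. (integral S (P y) - integral S (P y0)) / (y - y0)) \<circ> X) \<longlonglongrightarrow> integral S Q"
      by (simp add: o_def LIMSEQ_offset[where k = N0])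
  qed
qed

lemma abs_diff_le_of_deriv_bound:
  fixes w w' :: "real \<Rightarrow> real"
  assumes "a \<le> b" "finite E" "0 \<le> K" "continuous_on {a..b} w"
    and deriv: "\<And>t. t \<in> {a<..<b} - E \<Longrightarrow> (w has_real_derivative w' t) (at t)"
    and bound: "\<And>t. t \<in> {a<..<b} - E \<Longrightarrow> \<bar>w' t\<bar> \<le> K"
  shows "\<bar>w b - w a\<bar> \<le> K * (b - a)"
proof -
  have "(w' has_integral (w b - w a)) {a..b}"
    using deriv assms(1,2,4)
    by (intro fundamental_theorem_of_calculus_interior_strong)
       (simp_all add: has_real_derivative_iff_has_vector_derivative)
  then have "norm (w b - w a) \<le> K * Henstock_Kurzweil_Integration.content {a..b}"
    using assms(2) by (intro has_integral_bound_real[OF assms(3), of "E \<union> {a, b}"]) (auto intro!: bound)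
  then show ?thesis using assms(1) by simp
qed

lemma has_integral_reflect_Icc:
  fixes k :: "real \<Rightarrow> real"
  assumes "(k has_integral i) {0..y}"
  shows "((\<lambda>p. k (y - p)) has_integral i) {0..y}"
proof -
  have "((\<lambda>x. k (- x)) has_integral i) {-y..-0}" using assms by (simp only: has_integral_reflect_real)
  from has_integral_shift_real_ivl[OF this, of "-y"] show ?thesis by simp
qed

lemma integrable_on_Icc_continuous_dominated:
  fixes w H :: "real \<Rightarrow> real"
  assumes "continuous_on {a<..b} w" and H: "H integrable_on {a..b}"
    and bound: "\<And>s. s \<in> {a<..b} \<Longrightarrow> \<bar>w s\<bar> \<le> H s"
  shows "w integrable_on {a..b}"
proof -
  have "negligible ({a..b} - {a<..b} \<union> ({a<..b} - {a..b}))"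
    by (rule negligible_subset[of "{a}"]) auto
  note Icc_eq = integrable_spike_set_eq[OF this]
  have "w \<in> borel_measurable (lebesgue_on {a<..b})"
    using assms(1) by (rule continuous_imp_measurable_on_sets_lebesgue) simp
  moreover have "H integrable_on {a<..b}" using H Icc_eq by blast
  ultimately have "w integrable_on {a<..b}"
    by (rule measurable_bounded_by_integrable_imp_integrable) (use bound in auto)
  then show ?thesis using Icc_eq by blast
qed

lemma tendsto_integral_at_right:
  fixes f :: "real \<Rightarrow> real"
  assumes "f integrable_on {a..b}" "a < b"
  shows "((\<lambda>e. integral {e..b} f) \<longlongrightarrow> integral {a..b} f) (at_right a)"
  using continuous_on_Icc_at_rightD[OF indefinite_integral_continuous_1'[OF assms(1)] assms(2)] .

lemma powr_tendsto_0_at_right: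
  fixes p :: real
  assumes "0 < p"
  shows "((\<lambda>e. e powr p) \<longlongrightarrow> 0) (at_right 0)"
proof (rule tendsto_zero_powrI)
  show "\<forall>\<^sub>F e in at_right (0::real). 0 \<le> e"
    using eventually_at_right_less[of "0::real"] by (rule eventually_mono) simp
qed (use assms in \<open>auto intro: tendsto_ident_at\<close>)

lemma powr_mult_tendsto_0_at_right:
  fixes v :: "real \<Rightarrow> real"
  assumes "\<alpha> < 1" and bound: "\<And>e. 0 < e \<Longrightarrow> \<bar>v e\<bar> \<le> B * e"
  shows "((\<lambda>e. e powr (-\<alpha>) * v e) \<longlongrightarrow> 0) (at_right 0)"
proof (rule tendsto_0_le[OF powr_tendsto_0_at_right[of "1 - \<alpha>"]])
  show "\<forall>\<^sub>F e in at_right 0. norm (e powr (-\<alpha>) * v e) \<le> norm (e powr (1 - \<alpha>)) * B"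
    using eventually_at_right_less[of "0::real"]
  proof (rule eventually_mono)
    fix e :: real assume "0 < e"
    then have "e powr (-\<alpha>) * \<bar>v e\<bar> \<le> e powr (-\<alpha>) * (B * e)" using bound by (intro mult_left_mono) auto
    also have "\<dots> = B * (e * e powr (-\<alpha>))" by (simp add: algebra_simps)
    also have "e * e powr (-\<alpha>) = e powr (1 - \<alpha>)" using powr_mult_base[of e "-\<alpha>"] \<open>0 < e\<close> by simp
    finally show "norm (e powr (-\<alpha>) * v e) \<le> norm (e powr (1 - \<alpha>)) * B" by (simp add: abs_mult mult.commute)
  qed
qed (use assms(1) in simp)

lemma has_integral_powr_mult_by_parts:
  fixes v v' :: "real \<Rightarrow> real"
  assumes "0 < a" "a \<le> b" "finite E" and v: "continuous_on {a..b} v"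
    and deriv: "\<And>t. t \<in> {a<..<b} - E \<Longrightarrow> (v has_real_derivative v' t) (at t)"
  shows "((\<lambda>s. s powr (-\<gamma>) * v' s) has_integral
           b powr (-\<gamma>) * v b - a powr (-\<gamma>) * v a + \<gamma> * integral {a..b} (\<lambda>s. s powr (-\<gamma> - 1) * v s)) {a..b}"
proof -
  define u' where "u' s = (-\<gamma>) * s powr (-\<gamma> - 1)" for s :: real
  have u: "continuous_on {a..b} (\<lambda>s. s powr (-\<gamma>))" "continuous_on {a..b} u'"
    using assms(1) unfolding u'_def by (auto intro!: continuous_intros)
  have "((\<lambda>s. v s * u' s) has_integral integral {a..b} (\<lambda>s. v s * u' s)) {a..b}"
    by (intro integrable_integral integrable_continuous_interval continuous_intros v u)
  moreover have "integral {a..b} (\<lambda>s. v s * u' s) = integral {a..b} (\<lambda>s. - \<gamma> * (s powr (-\<gamma> - 1) * v s))"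
    by (rule integral_cong) (simp add: u'_def algebra_simps)
  then have "integral {a..b} (\<lambda>s. v s * u' s) = - \<gamma> * integral {a..b} (\<lambda>s. s powr (-\<gamma> - 1) * v s)"
    by simp
  ultimately have int: "((\<lambda>s. v s * u' s) has_integral v b * b powr (-\<gamma>) - v a * a powr (-\<gamma>) -
      (b powr (-\<gamma>) * v b - a powr (-\<gamma>) * v a + \<gamma> * integral {a..b} (\<lambda>s. s powr (-\<gamma> - 1) * v s))) {a..b}"
    by (simp add: algebra_simps)
  have "((\<lambda>s. v' s * s powr (-\<gamma>)) has_integral
      b powr (-\<gamma>) * v b - a powr (-\<gamma>) * v a + \<gamma> * integral {a..b} (\<lambda>s. s powr (-\<gamma> - 1) * v s)) {a..b}"
  proof (rule integration_by_parts_interior_strong[OF bounded_bilinear_mult assms(3,2) v u(1) _ _ int])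
    show "(v has_vector_derivative v' t) (at t)" if "t \<in> {a<..<b} - E" for t
      using deriv[OF that] by (simp add: has_real_derivative_iff_has_vector_derivative)
    show "((\<lambda>s. s powr (-\<gamma>)) has_vector_derivative u' t) (at t)" if "t \<in> {a<..<b} - E" for t
      using that assms(1) has_real_derivative_powr[of t "-\<gamma>"]
      by (simp add: u'_def has_real_derivative_iff_has_vector_derivative[symmetric])
  qed
  then show ?thesis by (simp add: mult.commute)
qed

lemma abs_mult_diff_quotient_le:
  fixes c x y h K :: real
  assumes "0 \<le> c" "h \<noteq> 0" "\<bar>x - y\<bar> \<le> K * \<bar>h\<bar>"
  shows "\<bar>(c * x - c * y) / h\<bar> \<le> c * K"
proof -
  have "\<bar>(c * x - c * y) / h\<bar> = c * (\<bar>x - y\<bar> / \<bar>h\<bar>)"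
    using assms(1) by (simp add: abs_mult abs_divide right_diff_distrib[symmetric])
  also have "\<dots> \<le> c * K"
    using assms by (intro mult_left_mono) (simp_all add: divide_le_eq)
  finally show ?thesis .
qed

lemma in_Lp_imp_integrable_on:
  assumes "in_Lp q g a b"
  shows "(\<lambda>x. \<bar>g x\<bar> powr q) integrable_on {a..b}"
  using assms unfolding in_Lp_def by (intro set_borel_integral_eq_integral(1)) auto

lemma AE_lebesgue_on_imp_negligible_exception:
  assumes "AE x in lebesgue_on S. P x" "S \<in> sets lebesgue"
  obtains N where "negligible N" "\<And>x. x \<in> S - N \<Longrightarrow> P x"
proof -
  have "AE x in lebesgue. x \<in> S \<longrightarrow> P x"
    using assms by (subst (asm) AE_restrict_space_iff) auto
  then obtain N where N: "{x \<in> space lebesgue. \<not> (x \<in> S \<longrightarrow> P x)} \<subseteq> N"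
    "emeasure lebesgue N = 0" "N \<in> sets lebesgue"
    by (rule AE_E)
  then have "negligible N" by (simp add: negligible_iff_null_sets null_sets_def)
  with N(1) show thesis by (intro that) auto
qed

lemma deriv_zero_at_local_max:
  fixes f :: "real \<Rightarrow> real"
  assumes x0: "x0 \<in> {a<..<b}" and deriv: "(f has_real_derivative d) (at x0)"
    and locmax: "\<exists>\<delta>>0. \<forall>x\<in>{a..b}. \<bar>x - x0\<bar> < \<delta> \<longrightarrow> f x \<le> f x0"
  shows "d = 0"
proof -
  obtain \<delta> where "\<delta> > 0" and \<delta>: "\<forall>x\<in>{a..b}. \<bar>x - x0\<bar> < \<delta> \<longrightarrow> f x \<le> f x0"
    using locmax by blast
  define \<delta>' where "\<delta>' = min \<delta> (min (x0 - a) (b - x0))"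
  have "\<delta>' > 0" using \<open>\<delta> > 0\<close> x0 by (simp add: \<delta>'_def)
  moreover have "\<forall>y. \<bar>x0 - y\<bar> < \<delta>' \<longrightarrow> f y \<le> f x0"
  proof (intro allI impI)
    fix y assume "\<bar>x0 - y\<bar> < \<delta>'"
    then have "y \<in> {a..b}" "\<bar>y - x0\<bar> < \<delta>" by (auto simp: \<delta>'_def)
    with \<delta> show "f y \<le> f x0" by blast
  qed
  ultimately show ?thesis using DERIV_local_max[OF deriv] by blast
qed

definition ext_const_left :: "(real \<Rightarrow> real) \<Rightarrow> real \<Rightarrow> real" where
  "ext_const_left f t = f (max t 0) - f 0"

definition ext_zero_left :: "(real \<Rightarrow> real) \<Rightarrow> real \<Rightarrow> real" where
  "ext_zero_left \<phi> t = (if t \<le> 0 then 0 else \<phi> t)"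

lemma ext_const_left_nonpos: "t \<le> 0 \<Longrightarrow> ext_const_left f t = 0"
  by (simp add: ext_const_left_def max_def)

lemma ext_const_left_nonneg: "0 \<le> t \<Longrightarrow> ext_const_left f t = f t - f 0"
  by (simp add: ext_const_left_def max_def)

lemma has_real_derivative_ext_const_left:
  assumes deriv: "\<And>t. t \<in> {0<..<L} \<Longrightarrow> (f has_real_derivative \<phi> t) (at t)"
    and "t < L" "t \<noteq> 0"
  shows "(ext_const_left f has_real_derivative ext_zero_left \<phi> t) (at t)"
proof (cases "t > 0")
  case True
  have "((\<lambda>x. f x - f 0) has_real_derivative \<phi> t) (at t)"
    using deriv[of t] True assms(2) by (auto intro: derivative_eq_intros)
  then have "(ext_const_left f has_real_derivative \<phi> t) (at t)"
    by (rule has_field_derivative_transform_within_open[of _ _ _ "{0<..<L}"])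
       (use True assms(2) in \<open>auto simp: ext_const_left_nonneg\<close>)
  then show ?thesis using True by (simp add: ext_zero_left_def)
next
  case False
  with assms(3) have "t < 0" by simp
  have "(ext_const_left f has_real_derivative 0) (at t)"
    by (rule has_field_derivative_transform_within_open[of "\<lambda>x. 0" _ _ "{..<0}"])
       (use \<open>t < 0\<close> in \<open>auto simp: ext_const_left_nonpos\<close>)
  then show ?thesis using False by (simp add: ext_zero_left_def)
qed

lemma continuous_on_ext_const_left:
  assumes "continuous_on {0..L} f" "0 \<le> L"
  shows "continuous_on {..L} (ext_const_left f)"
proof -
  have "continuous_on {..L} (\<lambda>t. f (max t 0))"
    by (rule continuous_on_compose2[OF assms(1)]) (use assms(2) in \<open>auto intro!: continuous_intros\<close>)
  then show ?thesis unfolding ext_const_left_def by (intro continuous_intros)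
qed

locale caputo_setting =
  fixes f \<phi> :: "real \<Rightarrow> real" and L B \<alpha> :: real
  assumes L_pos: "0 < L" and \<alpha>: "0 < \<alpha>" "\<alpha> < 1"
    and f_cont: "continuous_on {0..L} f"
    and f_deriv: "\<And>t. t \<in> {0<..<L} \<Longrightarrow> (f has_real_derivative \<phi> t) (at t)"
    and \<phi>_bound: "\<And>t. t \<in> {0<..<L} \<Longrightarrow> \<bar>\<phi> t\<bar> \<le> B"
begin

lemma B_nonneg: "0 \<le> B"
  using \<phi>_bound[of "L / 2"] L_pos by force

lemma ext_zero_left_bound: "t < L \<Longrightarrow> \<bar>ext_zero_left \<phi> t\<bar> \<le> B"
  using \<phi>_bound B_nonneg by (simp add: ext_zero_left_def)

lemma ext_const_left_continuous: "continuous_on {..L} (ext_const_left f)"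
  using continuous_on_ext_const_left[OF f_cont] L_pos by simp

lemma ext_const_left_lipschitz:
  assumes "x \<le> L" "y \<le> L"
  shows "\<bar>ext_const_left f x - ext_const_left f y\<bar> \<le> B * \<bar>x - y\<bar>"
proof -
  have main: "\<bar>ext_const_left f v - ext_const_left f u\<bar> \<le> B * (v - u)" if "u \<le> v" "v \<le> L" for u v
  proof (rule abs_diff_le_of_deriv_bound[OF \<open>u \<le> v\<close> _ B_nonneg, of "{0}"])
    show "continuous_on {u..v} (ext_const_left f)"
      using ext_const_left_continuous by (rule continuous_on_subset) (use that in auto)
    show "(ext_const_left f has_real_derivative ext_zero_left \<phi> t) (at t)" if "t \<in> {u<..<v} - {0}" for t
      using that \<open>v \<le> L\<close> by (intro has_real_derivative_ext_const_left[OF f_deriv]) auto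
    show "\<bar>ext_zero_left \<phi> t\<bar> \<le> B" if "t \<in> {u<..<v} - {0}" for t
      using that \<open>v \<le> L\<close> by (intro ext_zero_left_bound) auto
  qed simp
  show ?thesis
  proof (cases "x \<le> y")
    case True
    then show ?thesis using main[of x y] assms by (simp add: abs_minus_commute)
  next
    case False
    then show ?thesis using main[of y x] assms by simp
  qed
qed

lemma has_real_derivative_ext_const_left_shift:
  assumes "t - s < L" "t - s \<noteq> 0"
  shows "((\<lambda>z. ext_const_left f (z - s)) has_real_derivative ext_zero_left \<phi> (t - s)) (at t)"
proof -
  have g: "(ext_const_left f has_real_derivative ext_zero_left \<phi> (t - s)) (at (t - s))"
    using f_deriv assms by (rule has_real_derivative_ext_const_left)
  have "((\<lambda>z. z - s) has_real_derivative 1) (at t)"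
    by (auto intro!: derivative_eq_intros)
  from DERIV_chain2[of "ext_const_left f", OF _ this] g show ?thesis by simp
qed

lemma has_real_derivative_ext_const_left_reflect:
  assumes "y - t < L" "y - t \<noteq> 0"
  shows "((\<lambda>s. ext_const_left f (y - s)) has_real_derivative - ext_zero_left \<phi> (y - t)) (at t)"
proof -
  have g: "(ext_const_left f has_real_derivative ext_zero_left \<phi> (y - t)) (at (y - t))"
    using f_deriv assms by (rule has_real_derivative_ext_const_left)
  have "((\<lambda>s. y - s) has_real_derivative -1) (at t)"
    by (auto intro!: derivative_eq_intros)
  from DERIV_chain2[of "ext_const_left f", OF _ this] g show ?thesis by simp
qed

lemma powr_integrable: "\<gamma> > -1 \<Longrightarrow> (\<lambda>s. c * s powr \<gamma>) integrable_on {0..L}"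
  using integrable_on_powr_from_0[of \<gamma> L] L_pos by (intro integrable_on_mult_right) auto

lemma caputo_kernel_integrable:
  assumes "y \<le> L"
  shows "(\<lambda>s. s powr (-\<alpha>) * ext_const_left f (y - s)) integrable_on {0..L}"
proof (rule integrable_on_Icc_continuous_dominated)
  show "(\<lambda>s. B * (\<bar>y\<bar> + L) * s powr (-\<alpha>)) integrable_on {0..L}"
    using \<alpha> by (intro powr_integrable) auto
  have "continuous_on {0<..L} (\<lambda>s. ext_const_left f (y - s))"
    by (rule continuous_on_compose2[OF ext_const_left_continuous]) (use assms in \<open>auto intro!: continuous_intros\<close>)
  then show "continuous_on {0<..L} (\<lambda>s. s powr (-\<alpha>) * ext_const_left f (y - s))"
    by (intro continuous_intros) auto
  fix s assume s: "s \<in> {0<..L}"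
  have "\<bar>ext_const_left f (y - s)\<bar> \<le> B * \<bar>y - s\<bar>"
    using ext_const_left_lipschitz[of "y - s" 0] s assms by (simp add: ext_const_left_nonpos)
  also have "\<dots> \<le> B * (\<bar>y\<bar> + L)"
    using s B_nonneg by (intro mult_left_mono) auto
  finally show "\<bar>s powr (-\<alpha>) * ext_const_left f (y - s)\<bar> \<le> B * (\<bar>y\<bar> + L) * s powr (-\<alpha>)"
    by (simp add: abs_mult mult.commute mult_left_mono)
qed

lemma caputo_integral_eq:
  assumes "y \<in> {0..L}"
  shows "integral {0..y} (\<lambda>p. (y - p) powr (-\<alpha>) * (f p - f 0)) =
         integral {0..L} (\<lambda>s. s powr (-\<alpha>) * ext_const_left f (y - s))"
proof -
  define k where "k = (\<lambda>s. s powr (-\<alpha>) * ext_const_left f (y - s))"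
  have k_int: "k integrable_on {0..L}"
    unfolding k_def using assms by (intro caputo_kernel_integrable) auto
  have "integral {0..y} (\<lambda>p. (y - p) powr (-\<alpha>) * (f p - f 0)) = integral {0..y} (\<lambda>p. k (y - p))"
    by (intro integral_cong) (auto simp: k_def ext_const_left_nonneg)
  also have "\<dots> = integral {0..y} k"
    using integrable_on_subinterval[OF k_int] assms
    by (intro integral_unique has_integral_reflect_Icc integrable_integral) auto
  also have "\<dots> = integral {0..y} k + integral {y..L} k"
    using integral_cong[of "{y..L}" k "\<lambda>_. 0"] by (simp add: k_def ext_const_left_nonpos)
  also have "\<dots> = integral {0..L} k"
    using k_int assms by (intro Henstock_Kurzweil_Integration.integral_combine) auto
  finally show ?thesis by (simp add: k_def)
qed

lemma has_real_derivative_caputo_kernel_integral: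
  assumes y: "y \<in> {0<..<L}"
  shows "((\<lambda>z. integral {0..L} (\<lambda>s. s powr (-\<alpha>) * ext_const_left f (z - s))) has_real_derivative
           integral {0..L} (\<lambda>s. s powr (-\<alpha>) * ext_zero_left \<phi> (y - s))) (at y)"
    and "(\<lambda>s. s powr (-\<alpha>) * ext_zero_left \<phi> (y - s)) integrable_on {0..L}"
proof -
  have bound: "\<bar>(s powr (-\<alpha>) * ext_const_left f (z - s) - s powr (-\<alpha>) * ext_const_left f (y - s)) / (z - y)\<bar>
      \<le> s powr (-\<alpha>) * B" if "0 < \<bar>z - y\<bar>" "\<bar>z - y\<bar> < L - y" "s \<in> {0..L}" for z s
    using that y ext_const_left_lipschitz[of "z - s" "y - s"] by (intro abs_mult_diff_quotient_le) auto
  have deriv: "((\<lambda>z. s powr (-\<alpha>) * ext_const_left f (z - s)) has_real_derivative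
      s powr (-\<alpha>) * ext_zero_left \<phi> (y - s)) (at y)" if "s \<in> {0..L} - {y}" for s
    using has_real_derivative_ext_const_left_shift[of y s] that y by (intro DERIV_cmult) auto
  note dominated = has_real_derivative_integral_dominated[where P = "\<lambda>z s. s powr (-\<alpha>) * ext_const_left f (z - s)"
      and H = "\<lambda>s. s powr (-\<alpha>) * B" and E = "{y}" and r = "L - y", OF _ _ _ bound _ deriv]
  show "((\<lambda>z. integral {0..L} (\<lambda>s. s powr (-\<alpha>) * ext_const_left f (z - s))) has_real_derivative
           integral {0..L} (\<lambda>s. s powr (-\<alpha>) * ext_zero_left \<phi> (y - s))) (at y)"
    and "(\<lambda>s. s powr (-\<alpha>) * ext_zero_left \<phi> (y - s)) integrable_on {0..L}"
    using y \<alpha> powr_integrable[of "-\<alpha>" B]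
    by (auto intro!: dominated caputo_kernel_integrable simp: mult.commute)
qed

text \<open>\<open>\<Gamma>(1 - \<alpha>)\<close> times the Caputo derivative in Marchaud form: for \<open>0 < y < L\<close> this equals
  \<open>(f y - f 0) / y powr \<alpha> + \<alpha> * \<integral>\<^sub>0\<^sup>y (f y - f (y - s)) / s powr (\<alpha> + 1) ds\<close>.\<close>
definition marchaud :: "real \<Rightarrow> real" where
  "marchaud y = L powr (-\<alpha>) * ext_const_left f y +
     \<alpha> * integral {0..L} (\<lambda>s. s powr (-\<alpha> - 1) * (ext_const_left f y - ext_const_left f (y - s)))"

lemma marchaud_integrand_integrable:
  assumes "y \<le> L"
  shows "(\<lambda>s. s powr (-\<alpha> - 1) * (ext_const_left f y - ext_const_left f (y - s))) integrable_on {0..L}"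
proof (rule integrable_on_Icc_continuous_dominated)
  show "(\<lambda>s. B * s powr (-\<alpha>)) integrable_on {0..L}" using \<alpha> by (intro powr_integrable) auto
  have "continuous_on {0<..L} (\<lambda>s. ext_const_left f (y - s))"
    by (rule continuous_on_compose2[OF ext_const_left_continuous]) (use assms in \<open>auto intro!: continuous_intros\<close>)
  then show "continuous_on {0<..L} (\<lambda>s. s powr (-\<alpha> - 1) * (ext_const_left f y - ext_const_left f (y - s)))"
    by (intro continuous_intros) auto
  fix s assume s: "s \<in> {0<..L}"
  have "s powr (-\<alpha> - 1) * \<bar>ext_const_left f y - ext_const_left f (y - s)\<bar> \<le> s powr (-\<alpha> - 1) * (B * s)"
    using ext_const_left_lipschitz[of y "y - s"] assms s by (intro mult_left_mono) auto
  also have "\<dots> = B * s powr (-\<alpha>)"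
    using s by (simp add: powr_diff)
  finally show "\<bar>s powr (-\<alpha> - 1) * (ext_const_left f y - ext_const_left f (y - s))\<bar> \<le> B * s powr (-\<alpha>)"
    by (simp add: abs_mult)
qed

lemma kernel_integral_eq_marchaud:
  assumes y: "y \<in> {0<..<L}"
  shows "integral {0..L} (\<lambda>s. s powr (-\<alpha>) * ext_zero_left \<phi> (y - s)) = marchaud y"
proof -
  define v where "v = (\<lambda>s. ext_const_left f y - ext_const_left f (y - s))"
  define W1 where "W1 = (\<lambda>s. s powr (-\<alpha>) * ext_zero_left \<phi> (y - s))"
  define W2 where "W2 = (\<lambda>s. s powr (-\<alpha> - 1) * v s)"
  have W1_int: "W1 integrable_on {0..L}"
    using has_real_derivative_caputo_kernel_integral(2)[OF y] by (simp add: W1_def)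
  have W2_int: "W2 integrable_on {0..L}"
    using marchaud_integrand_integrable y by (simp add: W2_def v_def)
  have v_cont: "continuous_on {0..L} v"
    unfolding v_def
    by (intro continuous_intros continuous_on_compose2[OF ext_const_left_continuous]) (use y in auto)
  have v_bound: "\<bar>v s\<bar> \<le> B * s" if "0 \<le> s" for s
    using ext_const_left_lipschitz[of y "y - s"] y that by (simp add: v_def)
  have parts: "integral {e..L} W1 = L powr (-\<alpha>) * ext_const_left f y - e powr (-\<alpha>) * v e + \<alpha> * integral {e..L} W2"
    if e: "0 < e" "e < L" for e
  proof -
    have "(W1 has_integral L powr (-\<alpha>) * v L - e powr (-\<alpha>) * v e + \<alpha> * integral {e..L} W2) {e..L}"
      unfolding W1_def W2_def
    proof (rule has_integral_powr_mult_by_parts[of e L "{y}"])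
      show "continuous_on {e..L} v" using v_cont by (rule continuous_on_subset) (use e in auto)
      show "(v has_real_derivative ext_zero_left \<phi> (y - t)) (at t)" if "t \<in> {e<..<L} - {y}" for t
        using DERIV_diff[OF DERIV_const has_real_derivative_ext_const_left_reflect[of y t]] that e y
        by (simp add: v_def)
    qed (use e in auto)
    moreover have "v L = ext_const_left f y" using y by (simp add: v_def ext_const_left_nonpos)
    ultimately show ?thesis by (simp add: integral_unique)
  qed
  have "((\<lambda>e. e powr (-\<alpha>) * v e) \<longlongrightarrow> 0) (at_right 0)"
    using \<alpha> v_bound by (intro powr_mult_tendsto_0_at_right[where B = B]) auto
  then have "((\<lambda>e. L powr (-\<alpha>) * ext_const_left f y - e powr (-\<alpha>) * v e + \<alpha> * integral {e..L} W2)
      \<longlongrightarrow> L powr (-\<alpha>) * ext_const_left f y - 0 + \<alpha> * integral {0..L} W2) (at_right 0)"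
    by (intro tendsto_intros tendsto_integral_at_right[OF W2_int L_pos])
  moreover have "\<forall>\<^sub>F e in at_right 0. L powr (-\<alpha>) * ext_const_left f y - e powr (-\<alpha>) * v e + \<alpha> * integral {e..L} W2
      = integral {e..L} W1"
    using eventually_at_right_less[of 0] L_pos
    by (auto simp: eventually_at_right parts intro: exI[of _ L])
  ultimately have "((\<lambda>e. integral {e..L} W1) \<longlongrightarrow> L powr (-\<alpha>) * ext_const_left f y + \<alpha> * integral {0..L} W2) (at_right 0)"
    by (simp add: Lim_transform_eventually)
  from tendsto_unique[OF _ tendsto_integral_at_right[OF W1_int L_pos] this]
  show ?thesis by (simp add: marchaud_def W1_def W2_def v_def)
qed

lemma caputo_eq_marchaud:
  assumes "y \<in> {0<..<L}"
  shows "caputo \<alpha> f y = marchaud y / Gamma (1 - \<alpha>)"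
proof -
  have "((\<lambda>z. integral {0..z} (\<lambda>p. (z - p) powr (-\<alpha>) * (f p - f 0))) has_real_derivative marchaud y) (at y)"
  proof (rule has_field_derivative_transform_within_open[OF _ open_greaterThanLessThan assms])
    show "((\<lambda>z. integral {0..L} (\<lambda>s. s powr (-\<alpha>) * ext_const_left f (z - s))) has_real_derivative marchaud y) (at y)"
      using has_real_derivative_caputo_kernel_integral(1)[OF assms] kernel_integral_eq_marchaud[OF assms] by simp
  qed (simp add: caputo_integral_eq)
  then show ?thesis unfolding caputo_def by (simp add: DERIV_imp_deriv)
qed

end

locale caputo_local_max = caputo_setting +
  fixes x0 \<kappa> C \<beta> :: real
  assumes x0: "x0 \<in> {0<..<L}" and \<kappa>: "0 < \<kappa>" "\<kappa> < x0" and \<alpha>_less_\<beta>: "\<alpha> < \<beta>"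
    and holder: "\<And>a b. a \<in> {\<kappa>..L} \<Longrightarrow> b \<in> {\<kappa>..L} \<Longrightarrow> \<bar>\<phi> a - \<phi> b\<bar> \<le> C * \<bar>a - b\<bar> powr \<beta>"
    and critical: "\<phi> x0 = 0"
    and max_left: "\<And>t. t \<in> {0..x0} \<Longrightarrow> f t \<le> f x0"
begin

lemma C_nonneg: "0 \<le> C"
proof -
  have "0 \<le> C * \<bar>L - \<kappa>\<bar> powr \<beta>"
    using holder[of L \<kappa>] \<kappa> x0 by (auto intro: order_trans[OF abs_ge_zero])
  moreover have "\<bar>L - \<kappa>\<bar> powr \<beta> > 0" using \<kappa> x0 by simp
  ultimately show ?thesis by (simp add: zero_le_mult_iff)
qed

lemma holder_near_max:
  obtains r K where "0 < r" "0 < x0 - r" "x0 + r < L" "0 \<le> K"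
    "\<And>a s. a \<in> {x0 - r..x0 + r} \<Longrightarrow> s \<in> {0<..L} \<Longrightarrow>
       \<bar>ext_zero_left \<phi> a - ext_zero_left \<phi> (a - s)\<bar> \<le> K * s powr \<beta>"
proof -
  define d where "d = (x0 - \<kappa>) / 2"
  define r where "r = min d ((L - x0) / 2)"
  define K where "K = C + 2 * B / d powr \<beta>"
  have "0 < d" using \<kappa> by (simp add: d_def)
  have "x0 < L" using x0 by simp
  have "r \<le> (L - x0) / 2" unfolding r_def by (rule min.cobounded2)
  then have r: "0 < r" "r \<le> d" "x0 + r < L"
    using \<open>0 < d\<close> \<open>x0 < L\<close> by (auto simp: r_def)
  have "0 \<le> K" using C_nonneg B_nonneg by (simp add: K_def)
  have "\<bar>ext_zero_left \<phi> a - ext_zero_left \<phi> (a - s)\<bar> \<le> K * s powr \<beta>"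
    if a: "a \<in> {x0 - r..x0 + r}" and s: "s \<in> {0<..L}" for a s
  proof -
    have "x0 - r \<le> a" "a \<le> x0 + r" using a by auto
    then have a_bounds: "\<kappa> + d \<le> a" "a < L"
      using r d_def by (simp_all add: field_simps)
    then have "ext_zero_left \<phi> a = \<phi> a" using \<kappa> \<open>0 < d\<close> by (simp add: ext_zero_left_def)
    show ?thesis
    proof (cases "\<kappa> \<le> a - s")
      case True
      then have "ext_zero_left \<phi> (a - s) = \<phi> (a - s)" using \<kappa> by (simp add: ext_zero_left_def)
      with \<open>ext_zero_left \<phi> a = \<phi> a\<close> have "\<bar>ext_zero_left \<phi> a - ext_zero_left \<phi> (a - s)\<bar> \<le> C * s powr \<beta>"
        using holder[of a "a - s"] True a_bounds s by simp
      also have "\<dots> \<le> K * s powr \<beta>"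
        using B_nonneg \<open>0 < d\<close> by (intro mult_right_mono) (auto simp: K_def)
      finally show ?thesis .
    next
      case False
      then have "d \<le> s" using a_bounds by simp
      have "\<bar>ext_zero_left \<phi> a\<bar> \<le> B" "\<bar>ext_zero_left \<phi> (a - s)\<bar> \<le> B"
        using a_bounds s by (auto intro!: ext_zero_left_bound)
      then have "\<bar>ext_zero_left \<phi> a - ext_zero_left \<phi> (a - s)\<bar> \<le> 2 * B"
        using abs_triangle_ineq4[of "ext_zero_left \<phi> a" "ext_zero_left \<phi> (a - s)"] by linarith
      also have "\<dots> = 2 * B / d powr \<beta> * d powr \<beta>" using \<open>0 < d\<close> by simp
      also have "\<dots> \<le> 2 * B / d powr \<beta> * s powr \<beta>"
        using \<open>d \<le> s\<close> \<open>0 < d\<close> B_nonneg \<alpha> \<alpha>_less_\<beta> by (intro mult_left_mono powr_mono2) auto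
      also have "\<dots> \<le> K * s powr \<beta>"
        using C_nonneg by (intro mult_right_mono) (auto simp: K_def)
      finally show ?thesis .
    qed
  qed
  moreover have "0 < x0 - r" using r \<kappa> by (simp add: d_def)
  ultimately show thesis using that r \<open>0 \<le> K\<close> by blast
qed

lemma ext_const_left_second_difference:
  obtains r K where "0 < r" "x0 + r < L" "0 \<le> K"
    "\<And>y s. \<bar>y - x0\<bar> < r \<Longrightarrow> s \<in> {0<..L} \<Longrightarrow>
       \<bar>(ext_const_left f y - ext_const_left f (y - s)) - (ext_const_left f x0 - ext_const_left f (x0 - s))\<bar>
       \<le> K * s powr \<beta> * \<bar>y - x0\<bar>"
proof -
  obtain r K where r: "0 < r" "0 < x0 - r" "x0 + r < L" and "0 \<le> K"
    and near: "\<And>a s. a \<in> {x0 - r..x0 + r} \<Longrightarrow> s \<in> {0<..L} \<Longrightarrow>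
       \<bar>ext_zero_left \<phi> a - ext_zero_left \<phi> (a - s)\<bar> \<le> K * s powr \<beta>"
    using holder_near_max by blast
  define g where "g = ext_const_left f"
  have increment: "\<bar>(g v - g (v - s)) - (g u - g (u - s))\<bar> \<le> K * s powr \<beta> * (v - u)"
    if uv: "x0 - r < u" "u \<le> v" "v < x0 + r" and s: "s \<in> {0<..L}" for u v s
  proof (rule abs_diff_le_of_deriv_bound[OF \<open>u \<le> v\<close>, of "{s}"])
    show "continuous_on {u..v} (\<lambda>t. g t - g (t - s))"
      unfolding g_def using uv r s
      by (intro continuous_intros continuous_on_compose2[OF ext_const_left_continuous]) auto
    show "((\<lambda>t. g t - g (t - s)) has_real_derivative ext_zero_left \<phi> t - ext_zero_left \<phi> (t - s)) (at t)"
      if "t \<in> {u<..<v} - {s}" for t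
    proof -
      have "0 < t" "t < L" "t - s < L" "t - s \<noteq> 0"
        using that uv r s by auto
      then show ?thesis unfolding g_def
        by (intro DERIV_diff has_real_derivative_ext_const_left[OF f_deriv]
            has_real_derivative_ext_const_left_shift) auto
    qed
    show "\<bar>ext_zero_left \<phi> t - ext_zero_left \<phi> (t - s)\<bar> \<le> K * s powr \<beta>" if "t \<in> {u<..<v} - {s}" for t
      using near[of t s] that uv s by auto
  qed (use \<open>0 \<le> K\<close> in auto)
  have "\<bar>(g y - g (y - s)) - (g x0 - g (x0 - s))\<bar> \<le> K * s powr \<beta> * \<bar>y - x0\<bar>"
    if "\<bar>y - x0\<bar> < r" "s \<in> {0<..L}" for y s
    using increment[of x0 y s] increment[of y x0 s] that r
    by (cases "x0 \<le> y") (auto simp: abs_minus_commute)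
  with r \<open>0 \<le> K\<close> that show thesis by (simp add: g_def)
qed

lemma has_real_derivative_marchaud:
  "(marchaud has_real_derivative L powr (-\<alpha>) * ext_zero_left \<phi> x0 +
      \<alpha> * integral {0..L} (\<lambda>s. s powr (-\<alpha> - 1) * (ext_zero_left \<phi> x0 - ext_zero_left \<phi> (x0 - s)))) (at x0)"
  and marchaud_derivative_integrable:
  "(\<lambda>s. s powr (-\<alpha> - 1) * (ext_zero_left \<phi> x0 - ext_zero_left \<phi> (x0 - s))) integrable_on {0..L}"
proof -
  obtain r K where r: "0 < r" "x0 + r < L" and "0 \<le> K"
    and second_difference: "\<And>y s. \<bar>y - x0\<bar> < r \<Longrightarrow> s \<in> {0<..L} \<Longrightarrow>
       \<bar>(ext_const_left f y - ext_const_left f (y - s)) - (ext_const_left f x0 - ext_const_left f (x0 - s))\<bar>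
       \<le> K * s powr \<beta> * \<bar>y - x0\<bar>"
    using ext_const_left_second_difference by blast
  define g where "g = ext_const_left f"
  define P where "P = (\<lambda>y s. s powr (-\<alpha> - 1) * (g y - g (y - s)))"
  have bound: "\<bar>(P y s - P x0 s) / (y - x0)\<bar> \<le> s powr (-\<alpha> - 1) * (K * s powr \<beta>)"
    if "0 < \<bar>y - x0\<bar>" "\<bar>y - x0\<bar> < r" "s \<in> {0..L}" for y s
  proof (cases "s = 0")
    case False
    with that show ?thesis
      unfolding P_def g_def by (intro abs_mult_diff_quotient_le second_difference) auto
  qed (simp add: P_def)
  have deriv: "((\<lambda>y. P y s) has_real_derivative
      s powr (-\<alpha> - 1) * (ext_zero_left \<phi> x0 - ext_zero_left \<phi> (x0 - s))) (at x0)"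
    if "s \<in> {0..L} - {x0}" for s
    unfolding P_def g_def using that x0
    by (intro DERIV_cmult DERIV_diff has_real_derivative_ext_const_left[OF f_deriv]
        has_real_derivative_ext_const_left_shift) auto
  have "(\<lambda>s. s powr (-\<alpha> - 1) * (K * s powr \<beta>)) = (\<lambda>s. K * s powr (\<beta> - \<alpha> - 1))"
    using powr_add[of _ \<beta> "-\<alpha> - 1"] by (simp add: fun_eq_iff algebra_simps)
  then have dominating: "(\<lambda>s. s powr (-\<alpha> - 1) * (K * s powr \<beta>)) integrable_on {0..L}"
    using powr_integrable[of "\<beta> - \<alpha> - 1" K] \<alpha>_less_\<beta> by simp
  note dominated = has_real_derivative_integral_dominated[where P = P and E = "{x0}",
      OF r(1) _ dominating bound _ deriv]
  have P_int: "P y integrable_on {0..L}" if "\<bar>y - x0\<bar> < r" for y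
    unfolding P_def g_def using that r by (intro marchaud_integrand_integrable) auto
  show "(\<lambda>s. s powr (-\<alpha> - 1) * (ext_zero_left \<phi> x0 - ext_zero_left \<phi> (x0 - s))) integrable_on {0..L}"
    using dominated(2) P_int by simp
  have "marchaud = (\<lambda>y. L powr (-\<alpha>) * g y + \<alpha> * integral {0..L} (P y))"
    by (simp add: fun_eq_iff marchaud_def P_def g_def)
  moreover have "(g has_real_derivative ext_zero_left \<phi> x0) (at x0)"
    unfolding g_def using f_deriv x0 by (intro has_real_derivative_ext_const_left) auto
  ultimately show "(marchaud has_real_derivative L powr (-\<alpha>) * ext_zero_left \<phi> x0 +
      \<alpha> * integral {0..L} (\<lambda>s. s powr (-\<alpha> - 1) * (ext_zero_left \<phi> x0 - ext_zero_left \<phi> (x0 - s)))) (at x0)"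
    using dominated(1) P_int by (auto intro!: DERIV_add DERIV_cmult)
qed

lemma increment_left_of_critical:
  obtains r K where "0 < r" "r < x0" "0 \<le> K"
    "\<And>e. 0 < e \<Longrightarrow> e < r \<Longrightarrow> \<bar>f x0 - f (x0 - e)\<bar> \<le> K * e powr \<beta> * e"
proof -
  obtain r K where r: "0 < r" "0 < x0 - r" "x0 + r < L" and "0 \<le> K"
    and near: "\<And>a s. a \<in> {x0 - r..x0 + r} \<Longrightarrow> s \<in> {0<..L} \<Longrightarrow>
       \<bar>ext_zero_left \<phi> a - ext_zero_left \<phi> (a - s)\<bar> \<le> K * s powr \<beta>"
    using holder_near_max by blast
  have "\<bar>f x0 - f (x0 - e)\<bar> \<le> K * e powr \<beta> * (x0 - (x0 - e))" if e: "0 < e" "e < r" for e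
  proof (rule abs_diff_le_of_deriv_bound[of "x0 - e" x0 "{}"])
    show "continuous_on {x0 - e..x0} f"
      using f_cont by (rule continuous_on_subset) (use e r in auto)
    show "(f has_real_derivative \<phi> t) (at t)" if "t \<in> {x0 - e<..<x0} - {}" for t
      using that e r by (intro f_deriv) auto
    show "\<bar>\<phi> t\<bar> \<le> K * e powr \<beta>" if t: "t \<in> {x0 - e<..<x0} - {}" for t
    proof -
      have "\<bar>ext_zero_left \<phi> x0 - ext_zero_left \<phi> (x0 - (x0 - t))\<bar> \<le> K * (x0 - t) powr \<beta>"
        using t e r x0 by (intro near) auto
      then have "\<bar>\<phi> t\<bar> \<le> K * (x0 - t) powr \<beta>"
        using t e r by (simp add: critical ext_zero_left_def)
      also have "\<dots> \<le> K * e powr \<beta>"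
        using t \<open>0 \<le> K\<close> \<alpha> \<alpha>_less_\<beta> by (intro mult_left_mono powr_mono2) auto
      finally show ?thesis .
    qed
  qed (use e \<open>0 \<le> K\<close> in auto)
  with r \<open>0 \<le> K\<close> that show thesis by simp
qed

text \<open>Integration by parts against \<open>s powr -(\<alpha> + 1)\<close> turns the integrand into the increments
  \<open>f (x0 - s) - f x0 \<le> 0\<close>; only the boundary term at \<open>e\<close> can be positive, and it is
  \<open>O(e powr (\<beta> - \<alpha>))\<close>.\<close>
lemma marchaud_derivative_tail_bound:
  obtains r K where "0 < r" "\<And>e. 0 < e \<Longrightarrow> e < r \<Longrightarrow>
    integral {e..L} (\<lambda>s. s powr (-\<alpha> - 1) * (ext_zero_left \<phi> x0 - ext_zero_left \<phi> (x0 - s)))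
      \<le> K * e powr (\<beta> - \<alpha>)"
proof -
  obtain r K where r: "0 < r" "r < x0" and increment: "\<And>e. 0 < e \<Longrightarrow> e < r \<Longrightarrow>
      \<bar>f x0 - f (x0 - e)\<bar> \<le> K * e powr \<beta> * e"
    using increment_left_of_critical by blast
  define v where "v = (\<lambda>s. ext_const_left f (x0 - s) - ext_const_left f x0)"
  have x0_pos: "0 < x0" "x0 < L" using x0 by auto
  have v_nonpos: "v s \<le> 0" if "0 \<le> s" for s
    using max_left[of "max (x0 - s) 0"] that x0_pos by (simp add: v_def ext_const_left_def)
  have "integral {e..L} (\<lambda>s. s powr (-\<alpha> - 1) * (ext_zero_left \<phi> x0 - ext_zero_left \<phi> (x0 - s)))
      \<le> K * e powr (\<beta> - \<alpha>)" if e: "0 < e" "e < r" for e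
  proof -
    have v_cont: "continuous_on {e..L} v"
      unfolding v_def
      by (intro continuous_intros continuous_on_compose2[OF ext_const_left_continuous]) (use x0_pos e in auto)
    have parts: "((\<lambda>s. s powr (-(\<alpha> + 1)) * - ext_zero_left \<phi> (x0 - s)) has_integral
        L powr (-(\<alpha> + 1)) * v L - e powr (-(\<alpha> + 1)) * v e +
        (\<alpha> + 1) * integral {e..L} (\<lambda>s. s powr (-(\<alpha> + 1) - 1) * v s)) {e..L}"
    proof (rule has_integral_powr_mult_by_parts[OF _ _ _ v_cont, of "{x0}"])
      show "(v has_real_derivative - ext_zero_left \<phi> (x0 - t)) (at t)" if "t \<in> {e<..<L} - {x0}" for t
        using DERIV_diff[OF has_real_derivative_ext_const_left_reflect[of x0 t] DERIV_const] that e x0_pos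
        by (simp add: v_def)
    qed (use e r x0_pos in auto)
    have "ext_zero_left \<phi> x0 = 0" using critical x0_pos by (simp add: ext_zero_left_def)
    then have "integral {e..L} (\<lambda>s. s powr (-\<alpha> - 1) * (ext_zero_left \<phi> x0 - ext_zero_left \<phi> (x0 - s)))
        = L powr (-(\<alpha> + 1)) * v L - e powr (-(\<alpha> + 1)) * v e +
          (\<alpha> + 1) * integral {e..L} (\<lambda>s. s powr (-(\<alpha> + 1) - 1) * v s)"
      using integral_unique[OF parts] by simp
    moreover have "L powr (-(\<alpha> + 1)) * v L \<le> 0"
      using v_nonpos[of L] x0_pos by (simp add: mult_nonneg_nonpos)
    moreover have "(\<alpha> + 1) * integral {e..L} (\<lambda>s. s powr (-(\<alpha> + 1) - 1) * v s) \<le> 0"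
    proof -
      have "(\<lambda>s. s powr (-(\<alpha> + 1) - 1) * v s) integrable_on {e..L}"
        using e v_cont by (intro integrable_continuous_interval continuous_intros) auto
      then have "integral {e..L} (\<lambda>s. s powr (-(\<alpha> + 1) - 1) * v s) \<le> integral {e..L} (\<lambda>s. 0)"
        using v_nonpos e by (intro integral_le) (auto intro: mult_nonneg_nonpos)
      then show ?thesis using \<alpha> by (simp add: mult_nonneg_nonpos)
    qed
    moreover have "- (e powr (-(\<alpha> + 1)) * v e) \<le> K * e powr (\<beta> - \<alpha>)"
    proof -
      have "\<bar>v e\<bar> \<le> K * e powr \<beta> * e"
        using increment[OF e] e r by (simp add: v_def ext_const_left_nonneg abs_minus_commute)
      then have "- (e powr (-(\<alpha> + 1)) * v e) \<le> e powr (-(\<alpha> + 1)) * (K * e powr \<beta> * e)"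
        using mult_left_mono[of "- v e" "K * e powr \<beta> * e" "e powr (-(\<alpha> + 1))"] by (simp add: abs_le_iff)
      also have "\<dots> = K * (e powr \<beta> * (e * e powr (-(\<alpha> + 1))))"
        by (simp add: algebra_simps)
      also have "e * e powr (-(\<alpha> + 1)) = e powr (-\<alpha>)"
        using powr_mult_base[of e "-(\<alpha> + 1)"] e by simp
      also have "e powr \<beta> * e powr (-\<alpha>) = e powr (\<beta> - \<alpha>)"
        by (simp add: powr_add[symmetric])
      finally show ?thesis .
    qed
    ultimately show ?thesis by linarith
  qed
  with r(1) that show thesis by blast
qed

lemma marchaud_derivative_integral_nonpos:
  "integral {0..L} (\<lambda>s. s powr (-\<alpha> - 1) * (ext_zero_left \<phi> x0 - ext_zero_left \<phi> (x0 - s))) \<le> 0"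
proof -
  define Q where "Q = (\<lambda>s. s powr (-\<alpha> - 1) * (ext_zero_left \<phi> x0 - ext_zero_left \<phi> (x0 - s)))"
  obtain r K where "0 < r" and tail: "\<And>e. 0 < e \<Longrightarrow> e < r \<Longrightarrow> integral {e..L} Q \<le> K * e powr (\<beta> - \<alpha>)"
    using marchaud_derivative_tail_bound unfolding Q_def by blast
  have "((\<lambda>e. K * e powr (\<beta> - \<alpha>)) \<longlongrightarrow> K * 0) (at_right 0)"
    using \<alpha>_less_\<beta> by (intro tendsto_mult tendsto_const powr_tendsto_0_at_right) simp
  moreover have "((\<lambda>e. integral {e..L} Q) \<longlongrightarrow> integral {0..L} Q) (at_right 0)"
    using marchaud_derivative_integrable x0 unfolding Q_def by (intro tendsto_integral_at_right) auto
  moreover have "\<forall>\<^sub>F e in at_right 0. integral {e..L} Q \<le> K * e powr (\<beta> - \<alpha>)"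
    using \<open>0 < r\<close> by (auto simp: eventually_at_right intro!: exI[of _ r] tail)
  ultimately show ?thesis
    unfolding Q_def[symmetric] by (simp add: tendsto_le[OF trivial_limit_at_right_real])
qed

theorem caputo_derivative_nonpos:
  "\<exists>D. (caputo \<alpha> f has_real_derivative D) (at x0) \<and> D \<le> 0"
proof -
  define D where "D = L powr (-\<alpha>) * ext_zero_left \<phi> x0 +
      \<alpha> * integral {0..L} (\<lambda>s. s powr (-\<alpha> - 1) * (ext_zero_left \<phi> x0 - ext_zero_left \<phi> (x0 - s)))"
  have "((\<lambda>y. marchaud y / Gamma (1 - \<alpha>)) has_real_derivative D / Gamma (1 - \<alpha>)) (at x0)"
    unfolding D_def by (intro DERIV_cdivide has_real_derivative_marchaud)
  then have "(caputo \<alpha> f has_real_derivative D / Gamma (1 - \<alpha>)) (at x0)"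
    by (rule has_field_derivative_transform_within_open[OF _ open_greaterThanLessThan x0])
       (simp add: caputo_eq_marchaud)
  moreover have "D \<le> 0"
    using critical x0 \<alpha> marchaud_derivative_integral_nonpos
    by (simp add: D_def ext_zero_left_def mult_nonneg_nonpos)
  moreover have "Gamma (1 - \<alpha>) > 0" using \<alpha> by (intro Gamma_real_pos) simp
  ultimately show ?thesis by (auto intro: divide_nonpos_pos)
qed

end

theorem lemma7:
  fixes f f' f'' :: "real \<Rightarrow> real" and L \<beta> x0 :: real
  assumes L: "L > 0"
    and \<beta>: "0 < \<beta>" "\<beta> < 1"
    and f_deriv: "\<And>x. x \<in> {0..L} \<Longrightarrow> (f has_real_derivative f' x) (at x within {0..L})"
    and f'_ac: "abs_cont_on f' 0 L"
    and f''_deriv: "AE x in lebesgue_on {0..L}. (f' has_real_derivative f'' x) (at x)"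
    and f''_Lq: "\<And>\<kappa>. \<kappa> > 0 \<Longrightarrow> in_Lp (1 / (1 - \<beta>)) f'' \<kappa> L"
    and x0: "x0 \<in> {0<..<L}"
    and locmax: "\<exists>\<delta>>0. \<forall>x\<in>{0..L}. \<bar>x - x0\<bar> < \<delta> \<longrightarrow> f x \<le> f x0"
    and globmax: "\<forall>x\<in>{0..x0}. f x \<le> f x0"
  shows "\<forall>\<alpha>. 0 < \<alpha> \<and> \<alpha> < \<beta> \<longrightarrow>
           (\<exists>D. (caputo \<alpha> f has_real_derivative D) (at x0) \<and> D \<le> 0)"
proof (intro allI impI)
  fix \<alpha> :: real assume \<alpha>: "0 < \<alpha> \<and> \<alpha> < \<beta>"
  have f_deriv_at: "(f has_real_derivative f' t) (at t)" if "t \<in> {0<..<L}" for t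
    using f_deriv[of t] that by (simp add: at_within_Icc_at)
  obtain B where B: "\<And>t. t \<in> {0..L} \<Longrightarrow> \<bar>f' t\<bar> \<le> B"
    using compact_imp_bounded[OF compact_continuous_image[OF abs_cont_on_imp_continuous_on[OF f'_ac]]]
    by (force simp: bounded_iff)
  obtain N where N: "negligible N" "\<And>x. x \<in> {0..L} - N \<Longrightarrow> (f' has_real_derivative f'' x) (at x)"
    using AE_lebesgue_on_imp_negligible_exception[OF f''_deriv] by auto
  define \<kappa> where "\<kappa> = x0 / 2"
  have \<kappa>: "0 < \<kappa>" "\<kappa> < x0" using x0 by (auto simp: \<kappa>_def)
  interpret caputo_local_max f f' L B \<alpha> x0 \<kappa>
      "1 + integral {\<kappa>..L} (\<lambda>x. \<bar>f'' x\<bar> powr (1 / (1 - \<beta>)))" \<beta>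
  proof
    show "continuous_on {0..L} f"
      unfolding continuous_on_eq_continuous_within using f_deriv by (blast intro: DERIV_continuous)
    show "\<bar>f' a - f' b\<bar> \<le> (1 + integral {\<kappa>..L} (\<lambda>x. \<bar>f'' x\<bar> powr (1 / (1 - \<beta>)))) * \<bar>a - b\<bar> powr \<beta>"
      if "a \<in> {\<kappa>..L}" "b \<in> {\<kappa>..L}" for a b
      using \<kappa> that N by (intro holder_of_deriv_Lp[OF \<beta> abs_cont_on_subinterval[OF f'_ac]]
          in_Lp_imp_integrable_on f''_Lq) auto
    show "f' x0 = 0"
      using deriv_zero_at_local_max[OF x0 f_deriv_at[OF x0] locmax] .
  qed (use L \<alpha> \<beta> x0 \<kappa> B f_deriv_at globmax in auto)
  show "\<exists>D. (caputo \<alpha> f has_real_derivative D) (at x0) \<and> D \<le> 0"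
    by (rule caputo_derivative_nonpos)
qed

end
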